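(* For every integer $n\ge 2$, \[ \sum_{k=2}^{n}(-1)^{k}\genfrac{\{}{\}}{0pt}{}{n}{k}(k-1)!\,H_{k-1}H_{k}=\frac{n+1}{2}B_{n-2}. \]
   Context: $\genfrac{\{}{\}}{0pt}{}{n}{k}$ denotes the Stirling numbers of the second kind, $H_k=\sum_{i=1}^k 1/i$ the harmonic numbers, and $B_n$ the Bernoulli numbers, $\sum_{n\ge0}B_n t^n/n!=t/(e^t-1)$ (so $B_1=-1/2$). *)

theory Defs
  imports "HOL-Analysis.Analysis" "HOL-Combinatorics.Stirling"
    "HOL-Computational_Algebra.Formal_Power_Series"
begin

text \<open>Bernoulli numbers via the exponential generating function
  sum B_n t^n/n! = t/(e^t - 1), so that B_1 = -1/2.  Division of formal
  power series over a field cancels the common factor X.\<close>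
definition bernoulli :: "nat \<Rightarrow> real" where
  "bernoulli n = fact n * fps_nth (fps_X / (fps_exp 1 - 1)) n"

end

theory Submission
  imports Defs
begin

text \<open>
  Write \<open>T a n = \<Sum>\<^sub>k (-1)^k k! S(n,k) a\<^sub>k\<close>.  The recurrence \<open>S(n+1,k+1) = (k+1) S(n,k+1) + S(n,k)\<close>
  gives \<open>T a (n+1) = - T b n\<close> with \<open>b\<^sub>j = (j+1) a\<^sub>j\<^sub>+\<^sub>1 - j a\<^sub>j\<close>, and the binomial recurrence
  \<open>S(n+1,k+1) = \<Sum>\<^sub>i C(n,i) S(i,k)\<close> shows that shifting \<open>a\<close> one place to the right
  multiplies the exponential generating function of \<open>T a\<close> by \<open>-(e\<^sup>t - 1)\<close>.  The shift of
  \<open>1/(k+1)\<close> is \<open>1/k\<close> (as \<open>1/0 = 0\<close>), whose transform is \<open>-t\<close>; so \<open>T (1/(k+1))\<close> has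
  generating function \<open>t/(e\<^sup>t - 1)\<close>, i.e. \<open>T (1/(k+1)) n = B\<^sub>n\<close>.

  The left-hand side is \<open>T (H\<^sub>k\<^sub>-\<^sub>1 H\<^sub>k / k) n\<close>, and one difference step turns it into
  \<open>-T (H\<^sub>k/(k+1)) (n-1) - T (H\<^sub>k/k) (n-1)\<close>.  Another difference step gives
  \<open>T (H\<^sub>k/k) (n-1) = -B\<^sub>n\<^sub>-\<^sub>2\<close>.  The shift of \<open>H\<^sub>k/(k+1)\<close> has transform \<open>t\<^sup>2/2\<close>, so the
  generating function of \<open>T (H\<^sub>k/(k+1))\<close> is \<open>-(t/2) \<cdot> t/(e\<^sup>t - 1)\<close> and
  \<open>T (H\<^sub>k/(k+1)) (n-1) = -((n-1)/2) B\<^sub>n\<^sub>-\<^sub>2\<close>.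
\<close>

lemma sum_binomial_Suc:
  fixes f :: "nat \<Rightarrow> 'a::comm_semiring_1"
  shows "(\<Sum>i\<le>Suc n. of_nat (Suc n choose i) * f i)
       = (\<Sum>i\<le>n. of_nat (n choose i) * (f i + f (Suc i)))"
proof -
  have "(\<Sum>i\<le>Suc n. of_nat (Suc n choose i) * f i)
      = (\<Sum>i\<le>n. of_nat (n choose i) * f (Suc i)) + (f 0 + (\<Sum>i\<le>n. of_nat (n choose Suc i) * f (Suc i)))"
    by (subst sum.atMost_Suc_shift) (simp add: sum.distrib algebra_simps)
  also have "f 0 + (\<Sum>i\<le>n. of_nat (n choose Suc i) * f (Suc i)) = (\<Sum>i\<le>Suc n. of_nat (n choose i) * f i)"
    by (subst sum.atMost_Suc_shift) simp
  also have "\<dots> = (\<Sum>i\<le>n. of_nat (n choose i) * f i)"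
    by (simp add: binomial_eq_0)
  finally show ?thesis
    by (simp add: sum.distrib algebra_simps)
qed

lemma Stirling_Suc_Suc_eq_sum_binomial:
  "Stirling (Suc n) (Suc k) = (\<Sum>i\<le>n. (n choose i) * Stirling i k)"
proof (induction n arbitrary: k)
  case 0
  then show ?case by (cases k) auto
next
  case (Suc n)
  have "(\<Sum>i\<le>Suc n. (Suc n choose i) * Stirling i k)
      = (\<Sum>i\<le>n. (n choose i) * (Stirling i k + Stirling (Suc i) k))"
    using sum_binomial_Suc[of n "\<lambda>i. Stirling i k"] by simp
  also have "\<dots> = Stirling (Suc (Suc n)) (Suc k)"
  proof (cases k)
    case 0
    then show ?thesis using Suc.IH[of 0] by simp
  next
    case (Suc k')
    then have "(\<Sum>i\<le>n. (n choose i) * (Stirling i k + Stirling (Suc i) k))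
        = Suc k * (\<Sum>i\<le>n. (n choose i) * Stirling i k) + (\<Sum>i\<le>n. (n choose i) * Stirling i k')"
      by (simp add: sum.distrib sum_distrib_left algebra_simps)
    then show ?thesis using Suc Suc.IH[of k] Suc.IH[of k'] by simp
  qed
  finally show ?case by simp
qed

lemma Suc_times_Stirling_eq_sum_binomial:
  "Suc k * Stirling n (Suc k) = (\<Sum>i<n. (n choose i) * Stirling i k)"
  using Stirling_Suc_Suc_eq_sum_binomial[of n k] by (simp add: lessThan_Suc_atMost[symmetric])

lemma harm_minus_harm_pred: "harm n - harm (n - 1) = (1 / of_nat n :: 'a::real_normed_field)"
  by (cases n) (simp_all add: harm_Suc divide_inverse)

definition stirling_transform :: "(nat \<Rightarrow> 'a::{comm_ring_1,ring_char_0}) \<Rightarrow> nat \<Rightarrow> 'a" where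
  "stirling_transform a n = (\<Sum>k\<le>n. (-1) ^ k * fact k * of_nat (Stirling n k) * a k)"

lemma stirling_transform_lessThan:
  assumes "n < N"
  shows "stirling_transform a n = (\<Sum>k<N. (-1) ^ k * fact k * of_nat (Stirling n k) * a k)"
  unfolding stirling_transform_def
  by (rule sum.mono_neutral_left) (use assms in auto)

lemma stirling_transform_0 [simp]: "stirling_transform a 0 = a 0"
  by (simp add: stirling_transform_def)

lemma stirling_transform_add:
  "stirling_transform (\<lambda>k. a k + b k) n = stirling_transform a n + stirling_transform b n"
  by (simp add: stirling_transform_def sum.distrib algebra_simps)

lemma stirling_transform_Suc:
  assumes "\<And>j. of_nat (Suc j) * a (Suc j) - of_nat j * a j = b j"
  shows "stirling_transform a (Suc n) = - stirling_transform b n"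
proof -
  define g where "g j = (-1) ^ j * fact j * of_nat j * of_nat (Stirling n j) * a j" for j
  define h where "h j = (-1) ^ Suc j * fact (Suc j) * of_nat (Stirling n j) * a (Suc j)" for j
  have "stirling_transform a (Suc n)
      = (\<Sum>k\<le>n. (-1) ^ Suc k * fact (Suc k) * of_nat (Stirling (Suc n) (Suc k)) * a (Suc k))"
    unfolding stirling_transform_def by (subst sum.atMost_Suc_shift) simp
  also have "\<dots> = (\<Sum>k\<le>n. g (Suc k)) + (\<Sum>k\<le>n. h k)"
    unfolding g_def h_def by (simp add: sum.distrib[symmetric] algebra_simps)
  also have "(\<Sum>k\<le>n. g (Suc k)) = (\<Sum>k\<le>n. g k)"
    using sum.atMost_Suc_shift[of g n] by (simp add: g_def)
  also have "(\<Sum>k\<le>n. g k) + (\<Sum>k\<le>n. h k) = - stirling_transform b n"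
    unfolding stirling_transform_def g_def h_def assms[symmetric]
    by (simp add: sum.distrib[symmetric] sum_negf[symmetric] algebra_simps)
  finally show ?thesis .
qed

lemma stirling_transform_Suc_div:
  fixes c :: "nat \<Rightarrow> 'a::field_char_0"
  assumes "c 0 = 0" and "\<And>j. c (Suc j) - c j = b j"
  shows "stirling_transform (\<lambda>k. c k / of_nat k) (Suc n) = - stirling_transform b n"
proof (rule stirling_transform_Suc)
  fix j
  show "of_nat (Suc j) * (c (Suc j) / of_nat (Suc j)) - of_nat j * (c j / of_nat j) = b j"
    using assms(1) assms(2)[of j] by (cases j) (simp_all del: of_nat_Suc)
qed

lemma stirling_transform_shift:
  assumes "b 0 = 0" and "\<And>j. b (Suc j) = a j"
  shows "stirling_transform b n = - (\<Sum>i<n. of_nat (n choose i) * stirling_transform a i)"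
proof -
  have "stirling_transform b n = (\<Sum>k<Suc n. (-1) ^ k * fact k * of_nat (Stirling n k) * b k)"
    by (rule stirling_transform_lessThan) simp
  also have "\<dots> = (\<Sum>k<n. - ((-1) ^ k * fact k * a k * of_nat (Suc k * Stirling n (Suc k))))"
    by (subst sum.lessThan_Suc_shift) (simp add: assms algebra_simps)
  also have "\<dots> = (\<Sum>k<n. - ((-1) ^ k * fact k * a k * (\<Sum>i<n. of_nat (n choose i) * of_nat (Stirling i k))))"
    by (simp only: Suc_times_Stirling_eq_sum_binomial of_nat_sum of_nat_mult)
  also have "\<dots> = - (\<Sum>i<n. \<Sum>k<n. of_nat (n choose i) * ((-1) ^ k * fact k * of_nat (Stirling i k) * a k))"
    by (subst sum.swap) (simp add: sum_distrib_left sum_distrib_right sum_negf algebra_simps)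
  also have "\<dots> = - (\<Sum>i<n. of_nat (n choose i) * stirling_transform a i)"
    by (simp add: stirling_transform_lessThan[of _ n] sum_distrib_left)
  finally show ?thesis .
qed

definition stirling_transform_egf :: "(nat \<Rightarrow> 'a::field_char_0) \<Rightarrow> 'a fps" where
  "stirling_transform_egf a = Abs_fps (\<lambda>n. stirling_transform a n / fact n)"

lemma fps_exp_1_minus_1_nonzero: "fps_exp (1::'a::field_char_0) - 1 \<noteq> 0"
proof
  assume "fps_exp (1::'a) - 1 = 0"
  then have "fps_nth (fps_exp (1::'a) - 1) 1 = 0" by simp
  then show False by simp
qed

lemma stirling_transform_egf_shift:
  fixes a b :: "nat \<Rightarrow> 'a::field_char_0"
  assumes "b 0 = 0" and "\<And>j. b (Suc j) = a j"
  shows "stirling_transform_egf b = - ((fps_exp 1 - 1) * stirling_transform_egf a)"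
proof (rule fps_ext)
  fix n
  have "fps_nth ((fps_exp 1 - 1) * stirling_transform_egf a) n
      = (\<Sum>i\<le>n. stirling_transform a i / fact i * (if i = n then 0 else 1 / fact (n - i)))"
    by (subst mult.commute)
       (auto simp: fps_mult_nth stirling_transform_egf_def atLeast0AtMost intro!: sum.cong)
  also have "\<dots> = (\<Sum>i<n. stirling_transform a i / fact i * (1 / fact (n - i)))"
    by (simp add: lessThan_Suc_atMost[symmetric] mult.commute)
  also have "\<dots> = (\<Sum>i<n. of_nat (n choose i) * stirling_transform a i) / fact n"
    unfolding sum_divide_distrib
    by (intro sum.cong refl) (simp add: binomial_fact field_simps)
  finally show "fps_nth (stirling_transform_egf b) n = fps_nth (- ((fps_exp 1 - 1) * stirling_transform_egf a)) n"
    by (simp add: stirling_transform_egf_def stirling_transform_shift[OF assms])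
qed

lemma stirling_transform_inverse:
  "stirling_transform (\<lambda>k. 1 / real k) n = (if n = 1 then -1 else 0)"
proof (cases n)
  case (Suc m)
  have "stirling_transform (\<lambda>k. 1 / real k) (Suc m) = - stirling_transform (\<lambda>j. if j = 0 then 1 else 0) m"
    by (rule stirling_transform_Suc) simp
  also have "\<dots> = - real (Stirling m 0)"
    by (simp add: stirling_transform_def if_distrib[of "\<lambda>x. _ * x"] sum.delta cong: if_cong)
  finally show ?thesis using Suc by (cases m) simp_all
qed simp

lemma stirling_transform_harm_pred_div:
  "stirling_transform (\<lambda>k. harm (k - 1) / real k) n = (if n = 2 then 1 else 0)"
proof (cases n)
  case (Suc m)
  have "stirling_transform (\<lambda>k. harm (k - 1) / real k) (Suc m) = - stirling_transform (\<lambda>k. 1 / real k) m"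
    by (rule stirling_transform_Suc_div)
       (simp_all only: diff_Suc_1 diff_0_eq_0 harm_expand(1) harm_minus_harm_pred)
  then show ?thesis using Suc by (simp add: stirling_transform_inverse)
qed (simp add: harm_expand(1))

lemma stirling_transform_egf_inverse_Suc:
  "(fps_exp 1 - 1) * stirling_transform_egf (\<lambda>k. 1 / real (Suc k)) = fps_X"
proof -
  have "stirling_transform_egf (\<lambda>k. 1 / real k) = - fps_X"
    by (rule fps_ext) (simp add: stirling_transform_egf_def stirling_transform_inverse)
  then show ?thesis
    using stirling_transform_egf_shift[of "\<lambda>k. 1 / real k" "\<lambda>k. 1 / real (Suc k)"] by simp
qed

lemma stirling_transform_inverse_Suc_eq_bernoulli:
  "stirling_transform (\<lambda>k. 1 / real (Suc k)) n = bernoulli n"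
proof -
  have "fps_X / (fps_exp 1 - 1) = stirling_transform_egf (\<lambda>k. 1 / real (Suc k))"
    using stirling_transform_egf_inverse_Suc fps_exp_1_minus_1_nonzero
    by (metis fps_divide_times_eq mult.commute)
  then show ?thesis by (simp add: bernoulli_def stirling_transform_egf_def)
qed

lemma stirling_transform_harm_div:
  "stirling_transform (\<lambda>k. harm k / real k) (Suc m) = - bernoulli m"
proof -
  have "stirling_transform (\<lambda>k. harm k / real k) (Suc m) = - stirling_transform (\<lambda>k. 1 / real (Suc k)) m"
    by (rule stirling_transform_Suc_div) (simp_all add: harm_expand(1) harm_Suc divide_inverse)
  also have "\<dots> = - bernoulli m"
    by (simp only: stirling_transform_inverse_Suc_eq_bernoulli)
  finally show ?thesis .
qed

lemma stirling_transform_harm_div_Suc: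
  "stirling_transform (\<lambda>k. harm k / real (Suc k)) (Suc m) = - (real (Suc m) / 2) * bernoulli m"
proof -
  define E :: "real fps" where "E = fps_exp 1 - 1"
  define c where "c = stirling_transform_egf (\<lambda>k. harm k / real (Suc k))"
  define u where "u = stirling_transform_egf (\<lambda>k. 1 / real (Suc k))"
  have "stirling_transform_egf (\<lambda>k. harm (k - 1) / real k) = fps_const (1/2) * fps_X ^ 2"
    by (rule fps_ext)
       (simp only: stirling_transform_egf_def fps_nth_Abs_fps stirling_transform_harm_pred_div,
        simp add: fps_X_power_nth)
  then have c_eq: "E * c = - (fps_const (1/2) * fps_X ^ 2)"
    using stirling_transform_egf_shift[of "\<lambda>k. harm (k - 1) / real k" "\<lambda>k. harm k / real (Suc k)"]
    by (simp add: E_def c_def harm_expand minus_equation_iff[of "_ * c"])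
  have u_eq: "E * u = fps_X"
    unfolding E_def u_def by (rule stirling_transform_egf_inverse_Suc)
  have "E * (c + fps_const (1/2) * fps_X * u) = E * c + fps_const (1/2) * fps_X * (E * u)"
    by (simp add: algebra_simps)
  also have "\<dots> = 0"
    by (simp add: c_eq u_eq power2_eq_square)
  finally have "c = - (fps_const (1/2) * fps_X * u)"
    using fps_exp_1_minus_1_nonzero by (simp add: E_def eq_neg_iff_add_eq_0)
  then have "fps_nth c (Suc m) = - (1/2) * fps_nth u m"
    by (simp add: mult.assoc)
  then show ?thesis
    by (simp add: c_def u_def stirling_transform_egf_def stirling_transform_inverse_Suc_eq_bernoulli field_simps
        del: of_nat_Suc)
qed

lemma stirling_transform_harm_pred_harm_div:
  "stirling_transform (\<lambda>k. harm (k - 1) * harm k / real k) (Suc (Suc m))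
     = (real (Suc (Suc m)) + 1) / 2 * bernoulli m"
proof -
  have "stirling_transform (\<lambda>k. harm (k - 1) * harm k / real k) (Suc (Suc m))
      = - stirling_transform (\<lambda>k. harm k / real (Suc k) + harm k / real k) (Suc m)"
  proof (rule stirling_transform_Suc_div)
    fix j
    have "harm (Suc j) - harm (j - 1) = 1 / real (Suc j) + (1 / real j :: real)"
      using harm_minus_harm_pred[of j] by (simp add: harm_Suc divide_inverse algebra_simps)
    then show "harm (Suc j - 1) * harm (Suc j) - harm (j - 1) * harm j
        = harm j / real (Suc j) + harm j / real j"
      by (simp add: algebra_simps)
  qed (simp add: harm_expand(1))
  also have "\<dots> = (real (Suc (Suc m)) + 1) / 2 * bernoulli m"
    by (simp only: stirling_transform_add stirling_transform_harm_div stirling_transform_harm_div_Suc)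
       (simp add: field_simps)
  finally show ?thesis .
qed

lemma stirling_transform_harm_pred_harm_div_eq_sum:
  "stirling_transform (\<lambda>k. harm (k - 1) * harm k / real k) n
     = (\<Sum>k=2..n. (-1) ^ k * real (Stirling n k) * fact (k - 1) * harm (k - 1) * harm k)"
proof -
  have "stirling_transform (\<lambda>k. harm (k - 1) * harm k / real k) n
      = (\<Sum>k=2..n. (-1) ^ k * fact k * real (Stirling n k) * (harm (k - 1) * harm k / real k))"
    unfolding stirling_transform_def
    by (rule sum.mono_neutral_right) (auto simp: harm_expand le_Suc_eq)
  also have "\<dots> = (\<Sum>k=2..n. (-1) ^ k * real (Stirling n k) * fact (k - 1) * harm (k - 1) * harm k)"
    by (intro sum.cong refl) (simp add: fact_reduce)
  finally show ?thesis .
qed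

theorem theorem5:
  fixes n :: nat
  assumes "n \<ge> 2"
  shows "(\<Sum>k=2..n. (-1) ^ k * real (Stirling n k) * fact (k - 1)
            * harm (k - 1) * harm k) = (real n + 1) / 2 * bernoulli (n - 2)"
proof -
  obtain m where "n = Suc (Suc m)"
    using assms by (metis add_2_eq_Suc le_Suc_ex)
  then show ?thesis
    using stirling_transform_harm_pred_harm_div[of m] stirling_transform_harm_pred_harm_div_eq_sum[of n] by simp
qed

end
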